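(* Let $n\ge 1$ be an integer, let $f\colon\{0,1\}^n\to\mathbb{R}$, $f(x)=\sum_{i=1}^n w_ix_i$, be a linear function with weights $0<w_1\le w_2\le\dots\le w_n$, and let $g\colon\{0,1\}^n\to\mathbb{R}$ be $g(x)=\sum_{i=1}^n(1+i/n)x_i$. Let $x\in\{0,1\}^n$ and let $y\in\{0,1\}^n$ be obtained from $x$ by flipping each bit independently with probability $1/n$. Define the random variable $\Delta(x):=g(x)-g(y)$ if $f(y)\le f(x)$ and $\Delta(x):=0$ otherwise. Then $$\mathrm{E}[\Delta(x)]\ge \frac{g(x)}{4\mathrm{e} n}.$$ *)

theory Defs
  imports Complex_Main
begin

(* A bit string x in {0,1}^n is represented by the set of positions i in {1..n}
   with x_i = 1. *)

definition lin_fun :: "(nat \<Rightarrow> real) \<Rightarrow> nat set \<Rightarrow> real" where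
  "lin_fun w x = (\<Sum>i\<in>x. w i)"

definition g_fun :: "nat \<Rightarrow> nat set \<Rightarrow> real" where
  "g_fun n x = (\<Sum>i\<in>x. 1 + real i / real n)"

definition delta :: "nat \<Rightarrow> (nat \<Rightarrow> real) \<Rightarrow> nat set \<Rightarrow> nat set \<Rightarrow> real" where
  "delta n w x y = (if lin_fun w y \<le> lin_fun w x then g_fun n x - g_fun n y else 0)"

(* probability that standard bit mutation (each bit flipped independently
   with prob. 1/n) turns x into y, for x, y subsets of {1..n}:
   the flipped positions are exactly the symmetric difference of x and y *)
definition mut_prob :: "nat \<Rightarrow> nat set \<Rightarrow> nat set \<Rightarrow> real" where
  "mut_prob n x y =
     (1 / real n) ^ card ((x - y) \<union> (y - x)) *
     (1 - 1 / real n) ^ (n - card ((x - y) \<union> (y - x)))"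

definition expected_delta :: "nat \<Rightarrow> (nat \<Rightarrow> real) \<Rightarrow> nat set \<Rightarrow> real" where
  "expected_delta n w x = (\<Sum>y\<in>Pow {1..n}. mut_prob n x y * delta n w x y)"

end

theory Submission
  imports Defs
begin

(* Classify the mutants y by the set x - y of lost one-bits.  If nothing is lost,
   y is accepted only when y = x.  Otherwise the decrease of g is the weight of the lost bits
   minus the weight of the gained bits, and the gained bits are handled by a shifting argument:
   in any family of mutants closed under dropping a newly gained bit, each such bit is
   present with at most 1/(n - 1) times the probability of it being absent.  For two or more
   lost bits this already makes the contribution nonnegative.  For exactly one lost bit a,
   accepted mutants either gain only bits below a (shifting argument, plus the mutant x - {a}
   of probability (1/n)(1 - 1/n)^(n-1)), or swap a for a single higher bit, whose small cost
   is absorbed by an explicit polynomial inequality.  Each one-bit a of x thus contributes at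
   least (1/n)(1 - 1/n)^(n-1) (1 + a/n) / 4 >= (1 + a/n) / (4 e n). *)

lemma sum_diff_sets:
  fixes f :: "'a \<Rightarrow> 'b::ab_group_add"
  assumes "finite x" "finite y"
  shows "sum f y - sum f x = sum f (y - x) - sum f (x - y)"
  using assms by (simp add: sum.Int_Diff[of y f x] sum.Int_Diff[of x f y] Int_commute)

lemma sum_double_count:
  fixes c h :: "_ \<Rightarrow> 'c::comm_semiring_0"
  assumes "finite X" "finite Z"
  shows "(\<Sum>y\<in>X. c y * sum h {b\<in>Z. P y b}) = (\<Sum>b\<in>Z. h b * (\<Sum>y\<in>{y\<in>X. P y b}. c y))"
proof -
  have "(\<Sum>y\<in>X. c y * sum h {b\<in>Z. P y b}) = (\<Sum>y\<in>X. \<Sum>b\<in>Z. if P y b then c y * h b else 0)"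
    using assms by (simp add: sum.inter_filter sum_distrib_left if_distrib cong: if_cong)
  also have "\<dots> = (\<Sum>b\<in>Z. \<Sum>y\<in>X. if P y b then c y * h b else 0)"
    by (rule sum.swap)
  also have "\<dots> = (\<Sum>b\<in>Z. h b * (\<Sum>y\<in>{y\<in>X. P y b}. c y))"
    using assms by (simp add: sum.inter_filter sum_distrib_left if_distrib mult.commute cong: if_cong)
  finally show ?thesis .
qed

definition bit_weight :: "nat \<Rightarrow> nat \<Rightarrow> real" where
  "bit_weight n i = 1 + real i / real n"

lemma g_fun_bit_weight: "g_fun n S = sum (bit_weight n) S"
  unfolding g_fun_def bit_weight_def ..

lemma bit_weight_nonneg: "bit_weight n i \<ge> 0"
  unfolding bit_weight_def by simp

(* Every bit weight lies in [1, 2], so g(S) lies between |S| and 2|S|. *)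
lemma card_le_g_fun: "finite S \<Longrightarrow> real (card S) \<le> g_fun n S"
  unfolding g_fun_def using sum_mono[of S "\<lambda>_. 1::real" "\<lambda>i. 1 + real i / real n"] by simp

lemma g_fun_le_twice_card: "S \<subseteq> {1..n} \<Longrightarrow> g_fun n S \<le> 2 * real (card S)"
  unfolding g_fun_def using sum_bounded_above[of S "\<lambda>i. 1 + real i / real n" 2]
  by (fastforce simp: field_simps)

definition flip_prob :: "nat \<Rightarrow> nat \<Rightarrow> real" where
  "flip_prob n k = (1 / real n) ^ k * (1 - 1 / real n) ^ (n - k)"

lemma mut_prob_flip_prob: "mut_prob n x y = flip_prob n (card ((x - y) \<union> (y - x)))"
  unfolding mut_prob_def flip_prob_def ..

lemma flip_prob_nonneg: "n \<ge> 1 \<Longrightarrow> flip_prob n k \<ge> 0"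
  unfolding flip_prob_def by simp

(* Prescribing one more flip costs a factor (1/n) / (1 - 1/n) = 1/(n - 1). *)
lemma flip_prob_Suc:
  assumes "n \<ge> 2" "k < n"
  shows "flip_prob n (Suc k) = flip_prob n k / (real n - 1)"
proof -
  have nk: "n - k = Suc (n - Suc k)" using assms by simp
  have "1 - 1 / real n = (real n - 1) * (1 / real n)" using assms by (simp add: field_simps)
  then show ?thesis using assms unfolding flip_prob_def nk by simp
qed

lemma mut_prob_nonneg: "n \<ge> 1 \<Longrightarrow> mut_prob n x y \<ge> 0"
  unfolding mut_prob_flip_prob by (rule flip_prob_nonneg)

lemma mut_prob_insert:
  assumes "n \<ge> 2" "x \<subseteq> {1..n}" "y \<subseteq> {1..n}" "b \<in> {1..n}" "b \<notin> x" "b \<notin> y"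
  shows "mut_prob n x (insert b y) = mut_prob n x y / (real n - 1)"
proof -
  define D where "D = (x - y) \<union> (y - x)"
  have flips: "(x - insert b y) \<union> (insert b y - x) = insert b D"
    using assms unfolding D_def by auto
  have "D \<subseteq> {1..n} - {b}" using assms unfolding D_def by auto
  then have "card D < n" and "finite D" and "b \<notin> D"
    using assms card_mono[of "{1..n} - {b}" D] by (auto intro: finite_subset)
  then show ?thesis
    using flip_prob_Suc[OF assms(1)] unfolding mut_prob_flip_prob flips D_def[symmetric] by simp
qed

(* Shifting argument: if X is closed under dropping the new bit b, then y |-> y - {b}
   injects the members of X containing b into those avoiding b, at a loss of 1/(n - 1)
   in probability. *)
lemma mut_prob_gain_bit:
  assumes n2: "n \<ge> 2" and xU: "x \<subseteq> {1..n}" and XU: "X \<subseteq> Pow {1..n}"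
    and b: "b \<in> {1..n} - x" and closed: "\<And>y. y \<in> X \<Longrightarrow> b \<in> y \<Longrightarrow> y - {b} \<in> X"
  shows "(\<Sum>y\<in>{y\<in>X. b \<in> y}. mut_prob n x y) \<le> (\<Sum>y\<in>{y\<in>X. b \<notin> y}. mut_prob n x y) / (real n - 1)"
proof -
  define S where "S = {y\<in>X. b \<in> y}"
  have "finite X" using XU by (rule finite_subset) auto
  have inj: "inj_on (\<lambda>y. y - {b}) S" unfolding S_def inj_on_def by auto
  have img: "(\<lambda>y. y - {b}) ` S \<subseteq> {y\<in>X. b \<notin> y}" using closed unfolding S_def by auto
  have "(\<Sum>y\<in>S. mut_prob n x y) = (\<Sum>y\<in>S. mut_prob n x (y - {b}) / (real n - 1))"
  proof (rule sum.cong[OF refl])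
    fix y assume y: "y \<in> S"
    then have "y = insert b (y - {b})" unfolding S_def by auto
    moreover have "mut_prob n x (insert b (y - {b})) = mut_prob n x (y - {b}) / (real n - 1)"
      using y XU b by (intro mut_prob_insert[OF n2 xU]) (auto simp: S_def)
    ultimately show "mut_prob n x y = mut_prob n x (y - {b}) / (real n - 1)" by simp
  qed
  also have "\<dots> = (\<Sum>y\<in>(\<lambda>y. y - {b}) ` S. mut_prob n x y) / (real n - 1)"
    using inj by (simp add: sum.reindex sum_divide_distrib)
  also have "\<dots> \<le> (\<Sum>y\<in>{y\<in>X. b \<notin> y}. mut_prob n x y) / (real n - 1)"
    using img \<open>finite X\<close> n2 by (intro divide_right_mono sum_mono2 mut_prob_nonneg) auto
  finally show ?thesis unfolding S_def .
qed

lemma mut_prob_gain_weight: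
  fixes h :: "nat \<Rightarrow> real"
  assumes n2: "n \<ge> 2" and xU: "x \<subseteq> {1..n}" and XU: "X \<subseteq> Pow {1..n}" and Z: "Z \<subseteq> {1..n} - x"
    and closed: "\<And>y b. y \<in> X \<Longrightarrow> b \<in> Z \<Longrightarrow> b \<in> y \<Longrightarrow> y - {b} \<in> X"
    and h: "\<And>b. b \<in> Z \<Longrightarrow> h b \<ge> 0"
  shows "(\<Sum>y\<in>X. mut_prob n x y * sum h (y \<inter> Z))
       \<le> (\<Sum>y\<in>X. mut_prob n x y * sum h (Z - y)) / (real n - 1)"
proof -
  have fin: "finite X" "finite Z"
    using finite_subset[OF XU] finite_subset[OF Z] by auto
  have sets: "y \<inter> Z = {b\<in>Z. b \<in> y}" "Z - y = {b\<in>Z. b \<notin> y}" for y by auto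
  have "(\<Sum>y\<in>X. mut_prob n x y * sum h (y \<inter> Z)) = (\<Sum>b\<in>Z. h b * (\<Sum>y\<in>{y\<in>X. b \<in> y}. mut_prob n x y))"
    unfolding sets by (rule sum_double_count[OF fin])
  also have "\<dots> \<le> (\<Sum>b\<in>Z. h b * ((\<Sum>y\<in>{y\<in>X. b \<notin> y}. mut_prob n x y) / (real n - 1)))"
    using Z by (intro sum_mono mult_left_mono mut_prob_gain_bit[OF n2 xU XU] closed h) auto
  also have "\<dots> = (\<Sum>y\<in>X. mut_prob n x y * sum h (Z - y)) / (real n - 1)"
    unfolding sets sum_double_count[OF fin] sum_divide_distrib[of _ Z] by (simp only: times_divide_eq_right)
  finally show ?thesis .
qed

lemma sum_real_below: "(\<Sum>b\<in>{1..<a}. real b) = real (a - 1) * real a / 2"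
proof (induction a)
  case (Suc a)
  then show ?case
    by (cases "a = 0") (auto simp: atLeastLessThanSuc of_nat_diff field_simps)
qed simp

lemma sum_real_above:
  "a \<le> n \<Longrightarrow> (\<Sum>b\<in>{a<..n}. real b - real a) = real (n - a) * (real (n - a) + 1) / 2"
proof (induction n)
  case (Suc n)
  show ?case
  proof (cases "a = Suc n")
    case False
    with Suc.prems have "a \<le> n" and "{a<..Suc n} = insert (Suc n) {a<..n}" by auto
    then show ?thesis using Suc.IH by (simp add: of_nat_diff field_simps)
  qed simp
qed simp

(* The arithmetic heart of the single-flip case when bit a is lost: the expected
   loss from gaining a lower bit together with the loss from swapping a for a higher bit
   amounts to at most three quarters of the gain bit_weight n a. *)
lemma single_flip_balance:
  assumes "1 \<le> a" "a \<le> n" "n \<ge> 2"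
  shows "(\<Sum>b\<in>{1..<a}. bit_weight n b) / (real n - 1)
       + (\<Sum>b\<in>{a<..n}. (real b - real a) / real n) / (real n - 1) \<le> 3/4 * bit_weight n a"
proof -
  define A where "A = real a"
  define N where "N = real n"
  have A: "1 \<le> A" "A \<le> N" and N: "2 \<le> N" using assms unfolding A_def N_def by auto
  have below: "(\<Sum>b\<in>{1..<a}. bit_weight n b) = (A - 1) + (A - 1) * A / (2 * N)"
    unfolding bit_weight_def sum.distrib sum_divide_distrib[symmetric] sum_real_below
    using assms by (simp add: of_nat_diff A_def N_def)
  have above: "(\<Sum>b\<in>{a<..n}. (real b - real a) / real n) = (N - A) * (N - A + 1) / (2 * N)"
    using assms
    by (simp add: sum_divide_distrib[symmetric] sum_real_above of_nat_diff A_def N_def)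
  have "2 * N * (A - 1) + (A - 1) * A + (N - A) * (N - A + 1) \<le> 3 / 2 * (N + A) * (N - 1)"
  proof -
    have "0 \<le> (N - A) * (N + 4 * A - 1)" using A by (intro mult_nonneg_nonneg) auto
    then show ?thesis by (simp add: algebra_simps)
  qed
  then have "(2 * N * (A - 1) + (A - 1) * A + (N - A) * (N - A + 1)) / (2 * N)
      \<le> (3 / 2 * (N + A) * (N - 1)) / (2 * N)"
    using N by (intro divide_right_mono) auto
  also have "(2 * N * (A - 1) + (A - 1) * A + (N - A) * (N - A + 1)) / (2 * N)
      = (A - 1) + (A - 1) * A / (2 * N) + (N - A) * (N - A + 1) / (2 * N)"
    using N by (simp add: field_simps)
  also have "(3 / 2 * (N + A) * (N - 1)) / (2 * N) = 3/4 * (1 + A / N) * (N - 1)"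
    using N by (simp add: field_simps)
  finally have "((A - 1) + (A - 1) * A / (2 * N) + (N - A) * (N - A + 1) / (2 * N)) / (N - 1)
      \<le> 3/4 * (1 + A / N)"
    using N by (simp add: pos_divide_le_eq)
  then show ?thesis
    unfolding below above add_divide_distrib[symmetric]
    unfolding bit_weight_def A_def[symmetric] N_def[symmetric] .
qed

lemma one_flip_prob_ge: "n \<ge> 2 \<Longrightarrow> flip_prob n 1 \<ge> exp (-1) / real n"
proof -
  assume "n \<ge> 2"
  define m where "m = n - 1"
  have m: "m \<ge> 1" "real n = real m + 1" using \<open>n \<ge> 2\<close> unfolding m_def by auto
  have "(1 + 1 / real m) ^ m \<le> exp (1 / real m) ^ m"
    by (intro power_mono) (auto simp: add.commute[of _ 1] exp_ge_add_one_self)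
  also have "\<dots> = exp 1" using m by (simp add: exp_of_nat_mult[symmetric])
  finally have "1 / exp 1 \<le> 1 / (1 + 1 / real m) ^ m"
    by (intro divide_left_mono) (auto simp: add_pos_nonneg)
  also have "1 - 1 / real n = 1 / (1 + 1 / real m)" using m by (simp add: field_simps)
  then have "1 / (1 + 1 / real m) ^ m = (1 - 1 / real n) ^ (n - 1)"
    unfolding m_def[symmetric] by (simp add: power_one_over)
  finally have "exp (-1) \<le> (1 - 1 / real n) ^ (n - 1)" by (simp add: exp_minus inverse_eq_divide)
  then show ?thesis unfolding flip_prob_def by (simp add: divide_right_mono)
qed

(* If k >= 2 one-bits are lost, the bits that could be gained (at most n - k, each of
   weight <= 2) weigh, after the 1/(n - 1) discount, no more than the lost ones (each >= 1). *)
lemma multi_flip_pointwise: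
  assumes n2: "n \<ge> 2" and xU: "x \<subseteq> {1..n}" and two: "card (x - y) \<ge> 2"
  shows "g_fun n (({1..n} - x) - y) / (real n - 1) \<le> g_fun n (x - y)"
proof -
  define k where "k = real (card (x - y))"
  define m where "m = real (card (({1..n} - x) - y))"
  have fin: "finite (x - y)" "finite (({1..n} - x) - y)"
    using finite_subset[OF xU] by auto
  have "card ((({1..n} - x) - y) \<union> (x - y)) \<le> card {1..n}"
    using xU by (intro card_mono) auto
  then have mk: "m + k \<le> real n"
    using fin unfolding m_def k_def by (subst (asm) card_Un_disjoint) auto
  have k2: "k \<ge> 2" using two unfolding k_def by simp
  have "g_fun n (({1..n} - x) - y) \<le> 2 * m"
    unfolding m_def by (rule g_fun_le_twice_card) auto
  also have "\<dots> \<le> (real n - 1) * k"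
    using mult_right_mono[OF k2, of "real n + 1"] mk by (simp add: algebra_simps)
  also have "\<dots> \<le> (real n - 1) * g_fun n (x - y)"
    using n2 card_le_g_fun[OF fin(1)] unfolding k_def by (intro mult_left_mono) auto
  finally show ?thesis using n2 by (simp add: pos_divide_le_eq mult.commute)
qed

definition partial_drift :: "nat \<Rightarrow> (nat \<Rightarrow> real) \<Rightarrow> nat set \<Rightarrow> nat set set \<Rightarrow> real" where
  "partial_drift n w x Y = (\<Sum>y\<in>Y. mut_prob n x y * delta n w x y)"

lemma partial_drift_accepted:
  assumes "finite Y"
  shows "partial_drift n w x Y
       = (\<Sum>y\<in>{y\<in>Y. lin_fun w y \<le> lin_fun w x}. mut_prob n x y * (g_fun n x - g_fun n y))"
  unfolding partial_drift_def delta_def using assms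
  by (simp add: sum.inter_filter if_distrib cong: if_cong)

lemma partial_drift_Un:
  "finite A \<Longrightarrow> finite B \<Longrightarrow> A \<inter> B = {} \<Longrightarrow>
    partial_drift n w x (A \<union> B) = partial_drift n w x A + partial_drift n w x B"
  unfolding partial_drift_def by (rule sum.union_disjoint)

context
  fixes n :: nat and w :: "nat \<Rightarrow> real" and x :: "nat set"
  assumes n2: "n \<ge> 2"
    and wpos: "\<And>i. i \<in> {1..n} \<Longrightarrow> 0 < w i"
    and wmono: "\<And>i j. 1 \<le> i \<Longrightarrow> i \<le> j \<Longrightarrow> j \<le> n \<Longrightarrow> w i \<le> w j"
    and xU: "x \<subseteq> {1..n}"
begin

lemma finite_x: "finite x"
  using xU by (rule finite_subset) simp

lemma lin_fun_change:
  "y \<subseteq> {1..n} \<Longrightarrow> lin_fun w y - lin_fun w x = sum w (y - x) - sum w (x - y)"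
  unfolding lin_fun_def using finite_x by (intro sum_diff_sets) (auto intro: finite_subset)

lemma g_fun_change:
  assumes "y \<subseteq> {1..n}"
  shows "g_fun n x - g_fun n y = g_fun n (x - y) - g_fun n (y - x)"
proof -
  have "finite y" using assms by (rule finite_subset) simp
  then show ?thesis
    unfolding g_fun_def using sum_diff_sets[OF finite_x, of y "\<lambda>i. 1 + real i / real n"] by linarith
qed

lemma weight_sum_pos: "S \<subseteq> {1..n} \<Longrightarrow> S \<noteq> {} \<Longrightarrow> 0 < sum w S"
  using wpos by (intro sum_pos) (auto intro: finite_subset)

lemma accepted_remove:
  assumes yU: "y \<subseteq> {1..n}" and acc: "lin_fun w y \<le> lin_fun w x"
  shows "lin_fun w (y - {b}) \<le> lin_fun w x"
proof -
  have "\<And>i. i \<in> y \<Longrightarrow> 0 \<le> w i" using yU wpos by (meson less_imp_le subsetD)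
  then have "lin_fun w (y - {b}) \<le> lin_fun w y"
    unfolding lin_fun_def using finite_subset[OF yU] by (intro sum_mono2) auto
  then show ?thesis using acc by linarith
qed

(* A mutant losing no one-bit is accepted only if it equals x; so it never contributes. *)
lemma delta_superset:
  assumes yU: "y \<subseteq> {1..n}" and "x \<subseteq> y"
  shows "delta n w x y = 0"
proof (cases "lin_fun w y \<le> lin_fun w x")
  case True
  moreover have "sum w (x - y) = 0" using \<open>x \<subseteq> y\<close> by (metis sum.empty Diff_eq_empty_iff)
  ultimately have "sum w (y - x) \<le> 0" using lin_fun_change[OF yU] by linarith
  then have "y - x = {}" using weight_sum_pos[of "y - x"] yU by fastforce
  then show ?thesis using \<open>x \<subseteq> y\<close> by (simp add: delta_def Diff_eq_empty_iff subset_antisym)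
qed (simp add: delta_def)

(* Main estimate: for a family Y whose newly gained bits lie in Z and which is closed
   under dropping such bits, the shifting argument bounds the expected gain of g-weight,
   leaving a lower bound by the lost weight minus the discounted weight still available in Z. *)
lemma partial_drift_shift_bound:
  assumes YU: "Y \<subseteq> Pow {1..n}" and Z: "Z \<subseteq> {1..n} - x"
    and new_in_Z: "\<And>y. y \<in> Y \<Longrightarrow> y - x \<subseteq> Z"
    and closed: "\<And>y b. y \<in> Y \<Longrightarrow> b \<in> Z \<Longrightarrow> b \<in> y \<Longrightarrow> y - {b} \<in> Y"
  shows "partial_drift n w x Y \<ge> (\<Sum>y\<in>{y\<in>Y. lin_fun w y \<le> lin_fun w x}.
           mut_prob n x y * (g_fun n (x - y) - g_fun n (Z - y) / (real n - 1)))"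
proof -
  define X where "X = {y\<in>Y. lin_fun w y \<le> lin_fun w x}"
  have fY: "finite Y" using YU by (rule finite_subset) simp
  have XU: "X \<subseteq> Pow {1..n}" using YU unfolding X_def by auto
  have X_closed: "y - {b} \<in> X" if "y \<in> X" "b \<in> Z" "b \<in> y" for y b
    using that closed accepted_remove XU unfolding X_def by blast
  have change: "g_fun n x - g_fun n y = g_fun n (x - y) - sum (bit_weight n) (y \<inter> Z)" if "y \<in> X" for y
  proof -
    have "y - x = y \<inter> Z" using that new_in_Z Z unfolding X_def by blast
    then show ?thesis using g_fun_change[of y] that XU by (auto simp: g_fun_bit_weight)
  qed
  have "partial_drift n w x Y = (\<Sum>y\<in>X. mut_prob n x y * g_fun n (x - y))
      - (\<Sum>y\<in>X. mut_prob n x y * sum (bit_weight n) (y \<inter> Z))"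
    unfolding partial_drift_accepted[OF fY] X_def[symmetric] sum_subtractf[symmetric]
    by (intro sum.cong) (auto simp: change right_diff_distrib)
  moreover have "(\<Sum>y\<in>X. mut_prob n x y * sum (bit_weight n) (y \<inter> Z))
      \<le> (\<Sum>y\<in>X. mut_prob n x y * sum (bit_weight n) (Z - y)) / (real n - 1)"
    by (rule mut_prob_gain_weight[OF n2 xU XU Z X_closed bit_weight_nonneg])
  moreover have "(\<Sum>y\<in>X. mut_prob n x y * (g_fun n (x - y) - g_fun n (Z - y) / (real n - 1)))
      = (\<Sum>y\<in>X. mut_prob n x y * g_fun n (x - y))
      - (\<Sum>y\<in>X. mut_prob n x y * sum (bit_weight n) (Z - y)) / (real n - 1)"
    by (simp add: g_fun_bit_weight right_diff_distrib sum_subtractf sum_divide_distrib[of _ X])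
  ultimately show ?thesis unfolding X_def by linarith
qed

lemma partial_drift_no_loss: "partial_drift n w x {y\<in>Pow {1..n}. card (x - y) = 0} = 0"
  unfolding partial_drift_def using finite_x
  by (intro sum.neutral) (auto simp: delta_superset)

lemma partial_drift_multi: "partial_drift n w x {y\<in>Pow {1..n}. card (x - y) \<ge> 2} \<ge> 0"
proof -
  define Z where "Z = {1..n} - x"
  have "0 \<le> (\<Sum>y\<in>{y\<in>{y\<in>Pow {1..n}. card (x - y) \<ge> 2}. lin_fun w y \<le> lin_fun w x}.
           mut_prob n x y * (g_fun n (x - y) - g_fun n (Z - y) / (real n - 1)))"
    using n2 multi_flip_pointwise[OF n2 xU] unfolding Z_def
    by (intro sum_nonneg mult_nonneg_nonneg mut_prob_nonneg) auto
  also have "\<dots> \<le> partial_drift n w x {y\<in>Pow {1..n}. card (x - y) \<ge> 2}"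
  proof (rule partial_drift_shift_bound)
    fix y b assume "y \<in> {y\<in>Pow {1..n}. card (x - y) \<ge> 2}" "b \<in> Z"
    moreover have "x - (y - {b}) = x - y" using \<open>b \<in> Z\<close> unfolding Z_def by auto
    ultimately show "y - {b} \<in> {y\<in>Pow {1..n}. card (x - y) \<ge> 2}" by auto
  qed (auto simp: Z_def)
  finally show ?thesis .
qed

(* Mutants losing exactly bit a and gaining only lower bits: the shifting bound
   together with the mutant x - {a} yields at least Pr[flip a only] * (gain - discounted loss). *)
lemma partial_drift_single_low:
  assumes a: "a \<in> x"
  shows "partial_drift n w x {y\<in>Pow {1..n}. x - y = {a} \<and> y - x \<subseteq> {..<a}}
       \<ge> flip_prob n 1 * (bit_weight n a - (\<Sum>b\<in>{1..<a}. bit_weight n b) / (real n - 1))"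
proof -
  define Y where "Y = {y\<in>Pow {1..n}. x - y = {a} \<and> y - x \<subseteq> {..<a}}"
  define X where "X = {y\<in>Y. lin_fun w y \<le> lin_fun w x}"
  define Z where "Z = ({1..n} - x) \<inter> {..<a}"
  define \<sigma> where "\<sigma> = (\<Sum>b\<in>{1..<a}. bit_weight n b) / (real n - 1)"
  have aU: "a \<in> {1..n}" using a xU by auto
  have "\<sigma> + (\<Sum>b\<in>{a<..n}. (real b - real a) / real n) / (real n - 1) \<le> 3/4 * bit_weight n a"
    using single_flip_balance[of a n] aU n2 unfolding \<sigma>_def by simp
  moreover have "0 \<le> (\<Sum>b\<in>{a<..n}. (real b - real a) / real n) / (real n - 1)"
    using n2 by (intro divide_nonneg_nonneg sum_nonneg) auto
  ultimately have gain_pos: "0 \<le> bit_weight n a - \<sigma>"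
    using bit_weight_nonneg[of n a] by linarith
  have pointwise: "bit_weight n a - \<sigma> \<le> g_fun n (x - y) - g_fun n (Z - y) / (real n - 1)"
    if "y \<in> X" for y
  proof -
    have "g_fun n (Z - y) \<le> (\<Sum>b\<in>{1..<a}. bit_weight n b)"
      unfolding g_fun_bit_weight Z_def by (intro sum_mono2 bit_weight_nonneg) auto
    moreover have "x - y = {a}" using that unfolding X_def Y_def by auto
    ultimately show ?thesis
      using n2 unfolding \<sigma>_def by (simp add: g_fun_bit_weight divide_right_mono)
  qed
  define y0 where "y0 = x - {a}"
  have "lin_fun w x = lin_fun w y0 + w a"
    unfolding lin_fun_def y0_def using finite_x a by (simp add: sum.remove)
  then have y0X: "y0 \<in> X" using wpos[OF aU] xU a unfolding X_def Y_def y0_def by auto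
  have "(x - y0) \<union> (y0 - x) = {a}" unfolding y0_def using a by auto
  then have "flip_prob n 1 * (bit_weight n a - \<sigma>) = mut_prob n x y0 * (bit_weight n a - \<sigma>)"
    by (simp add: mut_prob_flip_prob)
  also have "\<dots> \<le> (\<Sum>y\<in>X. mut_prob n x y * (bit_weight n a - \<sigma>))"
    using y0X gain_pos n2 finite_subset[of X "Pow {1..n}"]
    by (intro member_le_sum mult_nonneg_nonneg mut_prob_nonneg) (auto simp: X_def Y_def)
  also have "\<dots> \<le> (\<Sum>y\<in>X. mut_prob n x y * (g_fun n (x - y) - g_fun n (Z - y) / (real n - 1)))"
    using pointwise n2 by (intro sum_mono mult_left_mono mut_prob_nonneg) auto
  also have "\<dots> \<le> partial_drift n w x Y"
    unfolding X_def by (rule partial_drift_shift_bound) (auto simp: Y_def Z_def)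
  finally show ?thesis unfolding \<sigma>_def Y_def .
qed

(* An accepted mutant that loses only bit a and gains some bit b with w a <= w b is
   exactly the swap of a for b: any further gained bit would increase f. *)
lemma accepted_swap:
  assumes yU: "y \<subseteq> {1..n}" and acc: "lin_fun w y \<le> lin_fun w x"
    and lost: "x - y = {a}" and b: "b \<in> y - x" and wab: "w a \<le> w b"
  shows "y = insert b (x - {a})"
proof -
  have "finite (y - x)" using yU by (auto intro: finite_subset)
  then have "sum w (y - x) = w b + sum w (y - x - {b})" using b by (simp add: sum.remove)
  moreover have "sum w (y - x) - w a \<le> 0" using lin_fun_change[OF yU] acc lost by simp
  ultimately have "sum w (y - x - {b}) \<le> 0" using wab by linarith
  then have "y - x - {b} = {}" using weight_sum_pos[of "y - x - {b}"] yU by fastforce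
  then have "y - x = {b}" using b by auto
  with lost show ?thesis by auto
qed

lemma swap_contribution:
  assumes a: "a \<in> x" and b: "b \<in> {1..n} - x" and ab: "a < b"
  shows "mut_prob n x (insert b (x - {a})) * delta n w x (insert b (x - {a}))
       \<ge> - (flip_prob n 2 * ((real b - real a) / real n))"
proof -
  define y where "y = insert b (x - {a})"
  have yU: "y \<subseteq> {1..n}" using b xU unfolding y_def by auto
  have flips: "x - y = {a}" "y - x = {b}" using a b ab unfolding y_def by auto
  then have prob: "mut_prob n x y = flip_prob n 2"
    using ab by (simp add: mut_prob_flip_prob insert_commute numeral_2_eq_2)
  have "g_fun n x - g_fun n y = bit_weight n a - bit_weight n b"
    using g_fun_change[OF yU] flips by (simp add: g_fun_bit_weight)
  also have "\<dots> = - ((real b - real a) / real n)"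
    unfolding bit_weight_def by (simp add: diff_divide_distrib)
  finally have "delta n w x y \<ge> - ((real b - real a) / real n)"
    using ab unfolding delta_def by auto
  from mult_left_mono[OF this flip_prob_nonneg, of n 2] n2
  show ?thesis unfolding y_def[symmetric] prob by simp
qed

(* Mutants losing exactly bit a and gaining a higher bit: only swaps can be accepted,
   so their total contribution is bounded below by the cost of all possible swaps. *)
lemma partial_drift_single_high:
  assumes a: "a \<in> x"
  shows "partial_drift n w x {y\<in>Pow {1..n}. x - y = {a} \<and> \<not> y - x \<subseteq> {..<a}}
       \<ge> - (flip_prob n 2 * (\<Sum>b\<in>{a<..n}. (real b - real a) / real n))"
proof -
  define Y where "Y = {y\<in>Pow {1..n}. x - y = {a} \<and> \<not> y - x \<subseteq> {..<a}}"
  define Zh where "Zh = ({1..n} - x) \<inter> {a<..}"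
  define swap where "swap = (\<lambda>b. insert b (x - {a}))"
  have aU: "a \<in> {1..n}" using a xU by auto
  have swaps_in_Y: "swap ` Zh \<subseteq> Y" using xU a unfolding Y_def Zh_def swap_def by auto
  have rejected: "delta n w x y = 0" if y: "y \<in> Y - swap ` Zh" for y
  proof (rule ccontr)
    assume "delta n w x y \<noteq> 0"
    then have acc: "lin_fun w y \<le> lin_fun w x" unfolding delta_def by (auto split: if_splits)
    from y obtain b where yU: "y \<subseteq> {1..n}" and lost: "x - y = {a}"
      and b: "b \<in> y - x" "\<not> b < a" unfolding Y_def by auto
    then have ab: "a < b" and bU: "b \<in> {1..n}" by (auto simp: nat_neq_iff)
    then have "y = swap b"
      unfolding swap_def using aU by (intro accepted_swap[OF yU acc lost b(1)] wmono) auto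
    moreover have "b \<in> Zh" unfolding Zh_def using b bU ab by auto
    ultimately show False using y by auto
  qed
  have "partial_drift n w x Y = partial_drift n w x (swap ` Zh)"
    unfolding partial_drift_def using swaps_in_Y rejected
    by (intro sum.mono_neutral_right) (auto simp: Y_def)
  also have "\<dots> = (\<Sum>b\<in>Zh. mut_prob n x (swap b) * delta n w x (swap b))"
    unfolding partial_drift_def
    by (rule sum.reindex[unfolded comp_def]) (auto simp: inj_on_def swap_def Zh_def)
  also have "\<dots> \<ge> (\<Sum>b\<in>Zh. - (flip_prob n 2 * ((real b - real a) / real n)))"
    unfolding swap_def using a by (intro sum_mono swap_contribution) (auto simp: Zh_def)
  finally have "partial_drift n w x Y \<ge> - (flip_prob n 2 * (\<Sum>b\<in>Zh. (real b - real a) / real n))"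
    by (simp add: sum_negf sum_distrib_left)
  moreover have "(\<Sum>b\<in>Zh. (real b - real a) / real n) \<le> (\<Sum>b\<in>{a<..n}. (real b - real a) / real n)"
    unfolding Zh_def by (intro sum_mono2) auto
  then have "flip_prob n 2 * (\<Sum>b\<in>Zh. (real b - real a) / real n)
      \<le> flip_prob n 2 * (\<Sum>b\<in>{a<..n}. (real b - real a) / real n)"
    using n2 by (intro mult_left_mono flip_prob_nonneg) auto
  ultimately show ?thesis unfolding Y_def by linarith
qed

lemma partial_drift_single:
  assumes a: "a \<in> x"
  shows "partial_drift n w x {y\<in>Pow {1..n}. x - y = {a}} \<ge> flip_prob n 1 * bit_weight n a / 4"
proof -
  define \<sigma> where "\<sigma> = (\<Sum>b\<in>{1..<a}. bit_weight n b) / (real n - 1)"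
  define S where "S = (\<Sum>b\<in>{a<..n}. (real b - real a) / real n)"
  have "{y\<in>Pow {1..n}. x - y = {a}} = {y\<in>Pow {1..n}. x - y = {a} \<and> y - x \<subseteq> {..<a}}
      \<union> {y\<in>Pow {1..n}. x - y = {a} \<and> \<not> y - x \<subseteq> {..<a}}" by auto
  then have "partial_drift n w x {y\<in>Pow {1..n}. x - y = {a}}
      = partial_drift n w x {y\<in>Pow {1..n}. x - y = {a} \<and> y - x \<subseteq> {..<a}}
      + partial_drift n w x {y\<in>Pow {1..n}. x - y = {a} \<and> \<not> y - x \<subseteq> {..<a}}"
    by (auto intro: partial_drift_Un)
  then have "partial_drift n w x {y\<in>Pow {1..n}. x - y = {a}}
      \<ge> flip_prob n 1 * (bit_weight n a - \<sigma>) - flip_prob n 2 * S"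
    using partial_drift_single_low[OF a] partial_drift_single_high[OF a]
    unfolding \<sigma>_def S_def by linarith
  also have "flip_prob n 2 * S = flip_prob n 1 * (S / (real n - 1))"
    using flip_prob_Suc[OF n2, of 1] n2 by (simp add: numeral_2_eq_2)
  finally have "partial_drift n w x {y\<in>Pow {1..n}. x - y = {a}}
      \<ge> flip_prob n 1 * (bit_weight n a - (\<sigma> + S / (real n - 1)))"
    by (simp add: algebra_simps)
  moreover have "bit_weight n a / 4 \<le> bit_weight n a - (\<sigma> + S / (real n - 1))"
    using single_flip_balance[of a n] a xU n2 unfolding \<sigma>_def S_def by auto
  then have "flip_prob n 1 * (bit_weight n a / 4)
      \<le> flip_prob n 1 * (bit_weight n a - (\<sigma> + S / (real n - 1)))"
    using n2 by (intro mult_left_mono flip_prob_nonneg) auto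
  ultimately have "flip_prob n 1 * (bit_weight n a / 4)
      \<le> partial_drift n w x {y\<in>Pow {1..n}. x - y = {a}}" by linarith
  then show ?thesis by simp
qed

lemma expected_delta_ge_single_flips: "expected_delta n w x \<ge> flip_prob n 1 * g_fun n x / 4"
proof -
  define C0 where "C0 = {y\<in>Pow {1..n}. card (x - y) = 0}"
  define C2 where "C2 = {y\<in>Pow {1..n}. card (x - y) \<ge> 2}"
  define Single where "Single = (\<lambda>a. {y\<in>Pow {1..n}. x - y = {a}})"
  have "{y\<in>Pow {1..n}. card (x - y) = 1} = (\<Union>a\<in>x. Single a)"
    unfolding Single_def by (auto simp: card_1_singleton_iff)
  then have part: "Pow {1..n} = (C0 \<union> C2) \<union> (\<Union>a\<in>x. Single a)"
    unfolding C0_def C2_def by auto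
  have fin: "finite C0" "finite C2" "finite (\<Union>a\<in>x. Single a)"
    using finite_x unfolding C0_def C2_def Single_def by auto
  have disj: "C0 \<inter> C2 = {}" "(C0 \<union> C2) \<inter> (\<Union>a\<in>x. Single a) = {}"
    unfolding C0_def C2_def Single_def by auto
  have "expected_delta n w x = partial_drift n w x ((C0 \<union> C2) \<union> (\<Union>a\<in>x. Single a))"
    unfolding expected_delta_def partial_drift_def part[symmetric] ..
  also have "\<dots> = partial_drift n w x C0 + partial_drift n w x C2 + partial_drift n w x (\<Union>a\<in>x. Single a)"
    using fin disj by (simp add: partial_drift_Un)
  also have "partial_drift n w x (\<Union>a\<in>x. Single a) = (\<Sum>a\<in>x. partial_drift n w x (Single a))"
    unfolding partial_drift_def using finite_x by (intro sum.UNION_disjoint) (auto simp: Single_def)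
  finally have split: "expected_delta n w x = partial_drift n w x C0 + partial_drift n w x C2
      + (\<Sum>a\<in>x. partial_drift n w x (Single a))" .
  have "flip_prob n 1 * g_fun n x / 4 = (\<Sum>a\<in>x. flip_prob n 1 * bit_weight n a / 4)"
    by (simp add: g_fun_bit_weight sum_distrib_left sum_divide_distrib)
  also have "\<dots> \<le> (\<Sum>a\<in>x. partial_drift n w x (Single a))"
    unfolding Single_def by (intro sum_mono partial_drift_single)
  finally show ?thesis
    using split partial_drift_no_loss partial_drift_multi unfolding C0_def C2_def by linarith
qed

end

lemma expected_delta_one_bit:
  assumes "0 < w 1" and "x \<subseteq> {1..1}"
  shows "expected_delta 1 w x \<ge> g_fun 1 x / (4 * exp 1)"
proof -
  have pow: "Pow {1..1::nat} = {{}, {1}}" by auto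
  from assms(2) have "x = {} \<or> x = {1}" by auto
  then show ?thesis
  proof
    assume "x = {}"
    then show ?thesis
      using assms(1) unfolding expected_delta_def pow
      by (simp add: delta_def lin_fun_def g_fun_def mut_prob_def)
  next
    assume "x = {1}"
    then have "expected_delta 1 w x = 2" and "g_fun 1 x = 2"
      using assms(1) unfolding expected_delta_def pow
      by (simp_all add: delta_def lin_fun_def g_fun_def mut_prob_def)
    moreover have "(1::real) \<le> 4 * exp 1" using exp_ge_add_one_self[of 1] by linarith
    ultimately show ?thesis by (simp add: field_simps)
  qed
qed

theorem lemma3:
  fixes n :: nat and w :: "nat \<Rightarrow> real" and x :: "nat set"
  assumes "n \<ge> 1"
    and "\<And>i. i \<in> {1..n} \<Longrightarrow> 0 < w i"
    and "\<And>i j. 1 \<le> i \<Longrightarrow> i \<le> j \<Longrightarrow> j \<le> n \<Longrightarrow> w i \<le> w j"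
    and "x \<subseteq> {1..n}"
  shows "expected_delta n w x \<ge> g_fun n x / (4 * exp 1 * real n)"
proof (cases "n = 1")
  case True
  then show ?thesis using expected_delta_one_bit[of w x] assms(2,4) by simp
next
  case False
  with assms(1) have n2: "n \<ge> 2" by simp
  have "0 \<le> g_fun n x" unfolding g_fun_bit_weight by (intro sum_nonneg bit_weight_nonneg)
  have "g_fun n x / (4 * exp 1 * real n) = exp (-1) / real n * g_fun n x / 4"
    by (simp add: exp_minus field_simps)
  also have "\<dots> \<le> flip_prob n 1 * g_fun n x / 4"
    using one_flip_prob_ge[OF n2] \<open>0 \<le> g_fun n x\<close> by (intro divide_right_mono mult_right_mono) auto
  also have "\<dots> \<le> expected_delta n w x"
    by (rule expected_delta_ge_single_flips[OF n2 assms(2-4)])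
  finally show ?thesis .
qed

end
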